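(* Let $D$ and $Y$ be random variables with finite supports $\mathcal{D}$ and $\mathcal{Y}$ and joint distribution $p_{D,Y}$. Define $P_c(D|Y)=\sum_{y\in\mathcal{Y}}p_Y(y)\max_{d\in\mathcal{D}}p_{D|Y}(d|y)$ (the maximum probability of correctly guessing $D$ from $Y$ over all estimators $\hat D$ with $D\to Y\to\hat D$), $p_D^*=\max_{d\in\mathcal{D}}p_D(d)$, and $\mathsf{Adv}(D|Y)=P_c(D|Y)/p_D^*$. Let $\epsilon\ge 0$. If $\mathsf{Adv}(D|Y)>1+\epsilon$, then for any probability distribution $p_{Y_T}$ on $\mathcal{Y}$ there exist $y\in\mathcal{Y}$ and $d\in\mathcal{D}$ such that \[ \left|\frac{p_{Y|D}(y|d)}{p_{Y_T}(y)}-1\right|>\epsilon. \] *)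

theory Defs
  imports "HOL-Probability.Probability"
begin

definition suppD :: "('d \<times> 'y) pmf \<Rightarrow> 'd set" where
  "suppD J = set_pmf (map_pmf fst J)"

definition suppY :: "('d \<times> 'y) pmf \<Rightarrow> 'y set" where
  "suppY J = set_pmf (map_pmf snd J)"

definition pD :: "('d \<times> 'y) pmf \<Rightarrow> 'd \<Rightarrow> real" where
  "pD J d = pmf (map_pmf fst J) d"

definition pY :: "('d \<times> 'y) pmf \<Rightarrow> 'y \<Rightarrow> real" where
  "pY J y = pmf (map_pmf snd J) y"

definition pD_given_Y :: "('d \<times> 'y) pmf \<Rightarrow> 'd \<Rightarrow> 'y \<Rightarrow> real" where
  "pD_given_Y J d y = pmf J (d, y) / pY J y"

definition pY_given_D :: "('d \<times> 'y) pmf \<Rightarrow> 'y \<Rightarrow> 'd \<Rightarrow> real" where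
  "pY_given_D J y d = pmf J (d, y) / pD J d"

definition Pc :: "('d \<times> 'y) pmf \<Rightarrow> real" where
  "Pc J = (\<Sum>y\<in>suppY J. pY J y * Max ((\<lambda>d. pD_given_Y J d y) ` suppD J))"

definition pD_star :: "('d \<times> 'y) pmf \<Rightarrow> real" where
  "pD_star J = Max (pD J ` suppD J)"

definition Adv :: "('d \<times> 'y) pmf \<Rightarrow> real" where
  "Adv J = Pc J / pD_star J"

end

theory Submission
  imports Defs
begin

text \<open>If every likelihood satisfies p(y|d) \<le> c q(y), then each joint mass p(d,y) is at most
  c q(y) p*_D; the maximal guessing probability is the sum over y of the largest joint mass in
  column y, hence at most c p*_D.  With c = 1 + \<epsilon> this contradicts Adv > 1 + \<epsilon>.\<close>

lemma pD_pos: "d \<in> suppD J \<Longrightarrow> pD J d > 0"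
  unfolding pD_def suppD_def by (rule pmf_positive)

lemma pY_pos: "y \<in> suppY J \<Longrightarrow> pY J y > 0"
  unfolding pY_def suppY_def by (rule pmf_positive)

lemma suppD_nonempty: "suppD J \<noteq> {}"
  unfolding suppD_def by (rule set_pmf_not_empty)

lemma pD_le_pD_star: "finite (suppD J) \<Longrightarrow> d \<in> suppD J \<Longrightarrow> pD J d \<le> pD_star J"
  unfolding pD_star_def by (intro Max_ge) auto

lemma pD_star_pos: "finite (suppD J) \<Longrightarrow> pD_star J > 0"
  using suppD_nonempty[of J] pD_pos pD_le_pD_star by (meson ex_in_conv less_le_trans)

lemma Pc_eq_sum_Max_joint:
  assumes "finite (suppD J)"
  shows "Pc J = (\<Sum>y\<in>suppY J. Max ((\<lambda>d. pmf J (d, y)) ` suppD J))"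
  unfolding Pc_def
proof (rule sum.cong)
  fix y assume "y \<in> suppY J"
  then have py: "pY J y > 0" by (rule pY_pos)
  have "pY J y * Max ((\<lambda>d. pD_given_Y J d y) ` suppD J)
        = Max ((\<lambda>d. pY J y * pD_given_Y J d y) ` suppD J)"
    using assms suppD_nonempty[of J] py
    by (subst mono_Max_commute[where f = "(*) (pY J y)"])
       (auto simp: mono_def image_image intro: mult_left_mono)
  also have "\<dots> = Max ((\<lambda>d. pmf J (d, y)) ` suppD J)"
    using py by (simp add: pD_given_Y_def)
  finally show "pY J y * Max ((\<lambda>d. pD_given_Y J d y) ` suppD J)
                = Max ((\<lambda>d. pmf J (d, y)) ` suppD J)" .
qed simp

lemma Pc_le_if_likelihood_le:
  assumes "finite (suppD J)" and "finite (suppY J)" and "set_pmf q \<subseteq> suppY J"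
    and likelihood_le: "\<And>y d. y \<in> suppY J \<Longrightarrow> d \<in> suppD J \<Longrightarrow> pY_given_D J y d \<le> c * pmf q y"
  shows "Pc J \<le> c * pD_star J"
proof -
  have joint_le: "pmf J (d, y) \<le> c * pmf q y * pD_star J"
    if y: "y \<in> suppY J" and d: "d \<in> suppD J" for y d
  proof -
    have pd: "pD J d > 0" using d by (rule pD_pos)
    have "0 \<le> pY_given_D J y d" using pd by (simp add: pY_given_D_def)
    then have cq: "0 \<le> c * pmf q y" using likelihood_le[OF y d] by linarith
    have "pmf J (d, y) = pY_given_D J y d * pD J d"
      using pd by (simp add: pY_given_D_def)
    also have "\<dots> \<le> c * pmf q y * pD J d"
      using likelihood_le[OF y d] pd by (simp add: mult_right_mono)
    also have "\<dots> \<le> c * pmf q y * pD_star J"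
      using cq pD_le_pD_star[OF assms(1) d] by (simp add: mult_left_mono)
    finally show ?thesis .
  qed
  have "Pc J \<le> (\<Sum>y\<in>suppY J. c * pmf q y * pD_star J)"
    unfolding Pc_eq_sum_Max_joint[OF assms(1)]
    using assms(1) suppD_nonempty[of J] joint_le
    by (intro sum_mono) (simp add: Max_le_iff)
  also have "\<dots> = c * pD_star J * (\<Sum>y\<in>suppY J. pmf q y)"
    by (simp add: sum_distrib_left mult_ac)
  also have "(\<Sum>y\<in>suppY J. pmf q y) = 1"
    using sum_pmf_eq_1[OF assms(2,3)] .
  finally show ?thesis by simp
qed

theorem proposition2:
  fixes J :: "('d \<times> 'y) pmf" and q :: "'y pmf" and \<epsilon> :: real
  assumes "finite (suppD J)" and "finite (suppY J)"
    and "\<epsilon> \<ge> 0"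
    and "Adv J > 1 + \<epsilon>"
    and "set_pmf q \<subseteq> suppY J"
  shows "\<exists>y\<in>suppY J. \<exists>d\<in>suppD J.
           (pmf q y = 0 \<and> pY_given_D J y d > 0) \<or>
           (pmf q y > 0 \<and> \<bar>pY_given_D J y d / pmf q y - 1\<bar> > \<epsilon>)"
proof (rule ccontr)
  assume close: "\<not> ?thesis"
  have "pY_given_D J y d \<le> (1 + \<epsilon>) * pmf q y"
    if "y \<in> suppY J" and "d \<in> suppD J" for y d
  proof (cases "pmf q y = 0")
    case False
    then have "pmf q y > 0" using pmf_nonneg[of q y] by linarith
    moreover have "\<bar>pY_given_D J y d / pmf q y - 1\<bar> \<le> \<epsilon>"
      using close that calculation by (auto simp: not_less)
    ultimately show ?thesis by (simp add: abs_le_iff divide_le_eq algebra_simps)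
  qed (use close that in \<open>auto simp: not_less\<close>)
  then have "Pc J \<le> (1 + \<epsilon>) * pD_star J"
    by (rule Pc_le_if_likelihood_le[OF assms(1,2,5)])
  then show False
    using assms(4) pD_star_pos[OF assms(1)] by (simp add: Adv_def less_divide_eq)
qed

end
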